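(* Let $k\ge 1$ and let $D_k=3k^2+3k+1$. Let $d=D_kq+\beta$ with integers $q\ge 1$ and $0\le \beta\le D_k-1$. Then \[ \gamma_k(T_d)\le \begin{cases} \dfrac{D_kq^2+(6k+3)q+2}{2}, & \text{if } \beta=0,\\[6pt] \dfrac{D_k(q+1)^2+(6k+3)(q+1)+2}{2}, & \text{if } \beta>0. \end{cases} \]
   Context: Let $\alpha_1=(1,0)$ and $\alpha_2=(-\tfrac12,\tfrac{\sqrt3}{2})$. The triangular lattice $T_\infty$ is the infinite graph with vertex set $\{a\alpha_1+b\alpha_2 : a,b\in\mathbb Z\}$, two vertices being adjacent iff their Euclidean distance is $1$. For an integer $d\ge 0$, the triangular matchstick graph $T_d$ is the subgraph of $T_\infty$ induced by the vertices $a\alpha_1+b\alpha_2$ with $0\le b\le a\le d$. For a connected graph $G$, a set $D\subseteq V(G)$ is a distance-$k$ dominating set if every vertex of $G$ is at (graph) distance at most $k$ from some vertex of $D$; $\gamma_k(G)$ is the minimum size of such a set. *)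

theory Defs
  imports "HOL-Analysis.Analysis"
begin

text \<open>Lattice point a*alpha1 + b*alpha2 in the plane, alpha1 = (1,0), alpha2 = (-1/2, sqrt 3/2).\<close>
definition tri_pt :: "int \<times> int \<Rightarrow> real \<times> real" where
  "tri_pt p = (real_of_int (fst p) - real_of_int (snd p) / 2,
               real_of_int (snd p) * sqrt 3 / 2)"

definition tri_adj :: "int \<times> int \<Rightarrow> int \<times> int \<Rightarrow> bool" where
  "tri_adj p q \<longleftrightarrow> dist (tri_pt p) (tri_pt q) = 1"

definition Tverts :: "nat \<Rightarrow> (int \<times> int) set" where
  "Tverts d = {(a, b). 0 \<le> b \<and> b \<le> a \<and> a \<le> int d}"

text \<open>A walk of length n in the induced subgraph on V: a list of n+1 vertices in V,
  consecutive ones adjacent.\<close>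
definition is_walk :: "(int \<times> int) set \<Rightarrow> (int \<times> int) list \<Rightarrow> bool" where
  "is_walk V ps \<longleftrightarrow> ps \<noteq> [] \<and> set ps \<subseteq> V \<and>
     (\<forall>i. Suc i < length ps \<longrightarrow> tri_adj (ps ! i) (ps ! Suc i))"

definition within_dist :: "nat \<Rightarrow> nat \<Rightarrow> int \<times> int \<Rightarrow> int \<times> int \<Rightarrow> bool" where
  "within_dist d k u v \<longleftrightarrow>
     (\<exists>ps. is_walk (Tverts d) ps \<and> hd ps = u \<and> last ps = v \<and> length ps \<le> k + 1)"

definition dist_dom_set :: "nat \<Rightarrow> nat \<Rightarrow> (int \<times> int) set \<Rightarrow> bool" where
  "dist_dom_set d k D \<longleftrightarrow> D \<subseteq> Tverts d \<and>
     (\<forall>v\<in>Tverts d. \<exists>u\<in>D. within_dist d k u v)"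

definition gamma_T :: "nat \<Rightarrow> nat \<Rightarrow> nat" where
  "gamma_T k d = (LEAST n. \<exists>D. dist_dom_set d k D \<and> card D = n)"

end

theory Submission
  imports Defs
begin

text \<open>
  In lattice coordinates the triangular lattice carries the hexagonal norm max(|x|, |y|, |x - y|),
  and two vertices of T_d at hexagonal distance n are joined by a walk of length at most n inside
  T_d. For D = 3k^2 + 3k + 1 the residue of (3k + 2)y - (3k + 1)x modulo D splits the lattice into
  D translates of a perfect distance-k code, so every point lies within distance k of every class.
  All points within distance k of T_d lie in a translate of T_(d+3k), so some class meets that
  triangle in at most a 1/D fraction of its (d + 3k + 1)(d + 3k + 2)/2 points. Projecting these
  onto T_d does not increase their distance to any vertex of T_d, so the projected points form a
  distance-k dominating set. For d \<le> Dq this gives the stated bound.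
\<close>

definition hex_norm :: "int \<times> int \<Rightarrow> int" where
  "hex_norm p = max (max \<bar>fst p\<bar> \<bar>snd p\<bar>) \<bar>fst p - snd p\<bar>"

lemma hex_norm_nonneg: "0 \<le> hex_norm p"
  by (simp add: hex_norm_def)

lemma hex_norm_uminus: "hex_norm (- x) = hex_norm x"
  by (simp add: hex_norm_def abs_minus_commute)

lemma hex_norm_le_0_iff: "hex_norm p \<le> 0 \<longleftrightarrow> p = 0"
  by (cases p) (auto simp: hex_norm_def zero_prod_def)

lemma dist_tri_pt:
  "dist (tri_pt p) (tri_pt q) =
     sqrt (real_of_int ((fst q - fst p)\<^sup>2 - (fst q - fst p) * (snd q - snd p) + (snd q - snd p)\<^sup>2))"
proof -
  have "sqrt 3 * sqrt 3 = (3::real)" by simp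
  then show ?thesis
    unfolding tri_pt_def dist_Pair_Pair dist_real_def
    by (simp add: power2_eq_square algebra_simps add_divide_distrib diff_divide_distrib)
qed

lemma tri_adj_if_hex_norm_1:
  assumes "hex_norm (q - p) = 1"
  shows "tri_adj p q"
proof -
  define x y where "x = fst q - fst p" and "y = snd q - snd p"
  have "(x, y) \<in> {(1,0), (-1,0), (0,1), (0,-1), (1,1), (-1,-1)}"
    using assms unfolding x_def y_def hex_norm_def by (auto simp: max_def abs_if split: if_splits)
  then have "x\<^sup>2 - x * y + y\<^sup>2 = 1" by (auto simp: power2_eq_square)
  then show ?thesis unfolding tri_adj_def dist_tri_pt x_def y_def by simp
qed

lemma is_walk_Cons:
  assumes "is_walk V ps" "u \<in> V" "tri_adj u (hd ps)"
  shows "is_walk V (u # ps)"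
  using assms unfolding is_walk_def by (auto simp: nth_Cons hd_conv_nth split: nat.split)

lemma Tverts_step_towards:
  assumes "u \<in> Tverts d" "v \<in> Tverts d" "u \<noteq> v"
  obtains w where "w \<in> Tverts d" "hex_norm (w - u) = 1" "hex_norm (w - v) + 1 = hex_norm (u - v)"
proof -
  obtain a b a' b' where uv: "u = (a, b)" "v = (a', b')" by fastforce
  have T: "0 \<le> b" "b \<le> a" "a \<le> int d" "0 \<le> b'" "b' \<le> a'" "a' \<le> int d"
    using assms(1,2) uv by (auto simp: Tverts_def)
  consider "a < a'" "b < b'" | "a' < a" "b' < b" | "a < a'" "b' \<le> b" | "a' < a" "b \<le> b'"
    | "a' = a" "b < b'" | "a' = a" "b' < b"
    using assms(3) uv by fastforce
  then show thesis
  proof cases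
    case 1
    then show thesis
      by (intro that[of "(a + 1, b + 1)"]) (use T in \<open>auto simp: uv hex_norm_def Tverts_def\<close>)
  next
    case 2
    then show thesis
      by (intro that[of "(a - 1, b - 1)"]) (use T in \<open>auto simp: uv hex_norm_def Tverts_def\<close>)
  next
    case 3
    then show thesis
      by (intro that[of "(a + 1, b)"]) (use T in \<open>auto simp: uv hex_norm_def Tverts_def\<close>)
  next
    case 4
    then show thesis
      by (intro that[of "(a - 1, b)"]) (use T in \<open>auto simp: uv hex_norm_def Tverts_def\<close>)
  next
    case 5
    then show thesis
      by (intro that[of "(a, b + 1)"]) (use T in \<open>auto simp: uv hex_norm_def Tverts_def\<close>)
  next
    case 6
    then show thesis
      by (intro that[of "(a, b - 1)"]) (use T in \<open>auto simp: uv hex_norm_def Tverts_def\<close>)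
  qed
qed

lemma within_dist_if_hex_norm_le:
  assumes "u \<in> Tverts d" "v \<in> Tverts d" "hex_norm (u - v) \<le> int k"
  shows "within_dist d k u v"
  using assms(1,3)
proof (induction k arbitrary: u)
  case 0
  then have "u = v" using hex_norm_le_0_iff[of "u - v"] by simp
  then show ?case using 0 unfolding within_dist_def is_walk_def by (intro exI[of _ "[u]"]) auto
next
  case (Suc k)
  show ?case
  proof (cases "u = v")
    case True
    then show ?thesis using Suc.prems unfolding within_dist_def is_walk_def
      by (intro exI[of _ "[u]"]) auto
  next
    case False
    then obtain w where w: "w \<in> Tverts d" "hex_norm (w - u) = 1" "hex_norm (w - v) + 1 = hex_norm (u - v)"
      using Tverts_step_towards Suc.prems(1) assms(2) by metis
    obtain ps where ps: "is_walk (Tverts d) ps" "hd ps = w" "last ps = v" "length ps \<le> k + 1"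
      using Suc.IH[OF w(1)] w(3) Suc.prems(2) unfolding within_dist_def by fastforce
    have "is_walk (Tverts d) (u # ps)"
      using is_walk_Cons[OF ps(1) Suc.prems(1)] tri_adj_if_hex_norm_1[OF w(2)] ps(2) by simp
    then show ?thesis using ps unfolding within_dist_def is_walk_def
      by (intro exI[of _ "u # ps"]) auto
  qed
qed

definition tri_proj :: "nat \<Rightarrow> int \<times> int \<Rightarrow> int \<times> int" where
  "tri_proj d p = (let a = fst p; b = snd p in
     if a \<le> 0 then (0, 0)
     else if b < 0 then (min a (int d), 0)
     else if a < b then (min a (int d), min a (int d))
     else if int d < a then (int d, min b (int d))
     else (a, b))"

lemma tri_proj_in_Tverts: "tri_proj d p \<in> Tverts d"
  by (cases p) (auto simp: tri_proj_def Tverts_def Let_def)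

lemma hex_norm_tri_proj_le:
  assumes "v \<in> Tverts d"
  shows "hex_norm (tri_proj d p - v) \<le> hex_norm (p - v)"
proof -
  obtain a b x y where pv: "p = (a, b)" "v = (x, y)" by fastforce
  have "0 \<le> y" "y \<le> x" "x \<le> int d" using assms pv by (auto simp: Tverts_def)
  then show ?thesis unfolding pv tri_proj_def hex_norm_def Let_def
    by (simp split: if_splits add: abs_if max_def min_def)
qed

definition hex_code_form :: "nat \<Rightarrow> int \<times> int \<Rightarrow> int" where
  "hex_code_form k p = (3 * int k + 2) * snd p - (3 * int k + 1) * fst p"

definition hex_code_class :: "nat \<Rightarrow> int \<times> int \<Rightarrow> int" where
  "hex_code_class k p = hex_code_form k p mod int (3 * k\<^sup>2 + 3 * k + 1)"

lemma hex_code_form_diff: "hex_code_form k (p - q) = hex_code_form k p - hex_code_form k q"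
  by (simp add: hex_code_form_def algebra_simps)

lemma hex_code_form_uminus: "hex_code_form k (- p) = - hex_code_form k p"
  by (simp add: hex_code_form_def)

lemma hex_norm_descent:
  assumes "int k < hex_norm x"
  obtains g where "int (3 * k\<^sup>2 + 3 * k + 1) dvd hex_code_form k g" "hex_norm (x - g) < hex_norm x"
proof -
  \<comment> \<open>Up to sign, the centres of the six code balls adjacent to the ball around the origin.\<close>
  define gens where "gens = {(int k + 1, 2 * int k + 1), (2 * int k + 1, int k), (int k, - int k - 1)}"
  have gens_dvd: "int (3 * k\<^sup>2 + 3 * k + 1) dvd hex_code_form k g" if "g \<in> gens" for g
  proof -
    define D where "D = int (3 * k\<^sup>2 + 3 * k + 1)"
    have "hex_code_form k g \<in> {D, - D, - 2 * D}"
      using that unfolding gens_def hex_code_form_def D_def by (auto simp: algebra_simps power2_eq_square)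
    then show ?thesis unfolding D_def[symmetric] by auto
  qed
  have half_plane: "\<exists>g \<in> gens. hex_norm (y - g) < hex_norm y"
    if large: "int k < hex_norm y" and pos: "0 < fst y \<or> (fst y = 0 \<and> snd y < 0)" for y
  proof -
    obtain a b where y: "y = (a, b)" by fastforce
    consider "0 < a" "0 < b" "a \<le> b" | "0 < a" "0 \<le> b" "b < a" | "0 \<le> a" "b < 0"
      using pos y by fastforce
    then show ?thesis
    proof cases
      case 1
      then have "hex_norm (y - (int k + 1, 2 * int k + 1)) < hex_norm y"
        using large unfolding y hex_norm_def by (auto simp: abs_if max_def split: if_splits)
      then show ?thesis unfolding gens_def by blast
    next
      case 2
      then have "hex_norm (y - (2 * int k + 1, int k)) < hex_norm y"
        using large unfolding y hex_norm_def by (auto simp: abs_if max_def split: if_splits)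
      then show ?thesis unfolding gens_def by blast
    next
      case 3
      then have "hex_norm (y - (int k, - int k - 1)) < hex_norm y"
        using large unfolding y hex_norm_def by (auto simp: abs_if max_def split: if_splits)
      then show ?thesis unfolding gens_def by blast
    qed
  qed
  show thesis
  proof (cases "0 < fst x \<or> (fst x = 0 \<and> snd x < 0)")
    case True
    then show thesis using half_plane[OF assms] gens_dvd that by blast
  next
    case False
    have "x \<noteq> 0" using assms by (auto simp: hex_norm_def)
    with False have "0 < fst (- x) \<or> (fst (- x) = 0 \<and> snd (- x) < 0)"
      by (cases x) (auto simp: zero_prod_def)
    then obtain g where g: "g \<in> gens" "hex_norm (- x - g) < hex_norm (- x)"
      using half_plane[of "- x"] assms hex_norm_uminus by auto
    have "- x - g = - (x - (- g))" by simp
    then have "hex_norm (x - (- g)) < hex_norm x"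
      using g(2) hex_norm_uminus by metis
    moreover have "int (3 * k\<^sup>2 + 3 * k + 1) dvd hex_code_form k (- g)"
      using gens_dvd[OF g(1)] by (simp add: hex_code_form_uminus)
    ultimately show thesis using that by blast
  qed
qed

lemma hex_code_class_dense:
  assumes "0 \<le> r" "r < int (3 * k\<^sup>2 + 3 * k + 1)"
  obtains c where "hex_code_class k c = r" "hex_norm (c - p) \<le> int k"
proof -
  have "\<exists>c'. hex_code_class k c' = r \<and> hex_norm (c' - p) \<le> int k"
    if "hex_code_class k c = r" "nat (hex_norm (c - p)) = n" for n c
    using that
  proof (induction n arbitrary: c rule: less_induct)
    case (less n)
    show ?case
    proof (cases "hex_norm (c - p) \<le> int k")
      case False
      then obtain g where g: "int (3 * k\<^sup>2 + 3 * k + 1) dvd hex_code_form k g"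
        "hex_norm (c - p - g) < hex_norm (c - p)"
        using hex_norm_descent by (metis not_le)
      have "hex_code_class k (c - g) = r"
        using less.prems(1) g(1) unfolding hex_code_class_def hex_code_form_diff
        by (auto simp: mod_diff_eq[symmetric] elim!: dvdE)
      moreover have "nat (hex_norm (c - g - p)) < n"
        using g(2) less.prems(2) hex_norm_nonneg[of "c - p - g"] by (simp add: algebra_simps)
      ultimately show ?thesis using less.IH by blast
    qed (use less.prems in blast)
  qed
  moreover have "hex_code_class k (r, r) = r"
    using assms unfolding hex_code_class_def hex_code_form_def by (simp add: algebra_simps)
  ultimately show thesis using that by blast
qed

lemma finite_Tverts: "finite (Tverts n)"
proof -
  have "Tverts n \<subseteq> {0..int n} \<times> {0..int n}" by (auto simp: Tverts_def)
  then show ?thesis by (rule finite_subset) simp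
qed

lemma card_Tverts: "2 * card (Tverts n) = (n + 1) * (n + 2)"
proof (induction n)
  case 0
  have "Tverts 0 = {(0, 0)}" by (auto simp: Tverts_def)
  then show ?case by simp
next
  case (Suc n)
  define row where "row = (\<lambda>b. (int (Suc n), b)) ` {0..int (Suc n)}"
  have "Tverts (Suc n) = Tverts n \<union> row" "Tverts n \<inter> row = {}"
    unfolding row_def by (auto simp: Tverts_def)
  moreover have "card row = n + 2"
    unfolding row_def by (subst card_image) (auto simp: inj_on_def)
  ultimately have "card (Tverts (Suc n)) = card (Tverts n) + (n + 2)"
    using finite_Tverts[of n] by (simp add: card_Un_disjoint row_def)
  then show ?case using Suc by simp
qed

lemma Tverts_shift_if_hex_norm_le:
  assumes "v \<in> Tverts d" "hex_norm (c - v) \<le> int k"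
  shows "c + (2 * int k, int k) \<in> Tverts (d + 3 * k)"
  using assms by (cases c; cases v) (auto simp: Tverts_def hex_norm_def)

lemma ex_fibre_card_le_average:
  assumes "finite R" "finite I" "I \<noteq> {}" "f ` R \<subseteq> I"
  obtains i where "i \<in> I" "card I * card {x \<in> R. f x = i} \<le> card R"
proof
  define fibre where "fibre i = card {x \<in> R. f x = i}" for i
  define i where "i = arg_min_on fibre I"
  show "i \<in> I" unfolding i_def using arg_min_if_finite(1)[OF assms(2,3)] .
  have "fibre i \<le> fibre j" if "j \<in> I" for j
    using arg_min_least[OF assms(2,3) that] unfolding i_def .
  then have "card I * fibre i \<le> (\<Sum>j\<in>I. fibre j)"
    using sum_bounded_below[of I "fibre i" fibre] by simp
  also have "\<dots> = card (\<Union>j\<in>I. {x \<in> R. f x = j})"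
    unfolding fibre_def by (rule card_UN_disjoint[symmetric]) (use assms(1,2) in auto)
  also have "(\<Union>j\<in>I. {x \<in> R. f x = j}) = R" using assms(4) by auto
  finally show "card I * card {x \<in> R. f x = i} \<le> card R" unfolding fibre_def .
qed

lemma gamma_T_le_card: "dist_dom_set d k D \<Longrightarrow> gamma_T k d \<le> card D"
  unfolding gamma_T_def by (rule Least_le) blast

lemma gamma_T_mult_le_card_Tverts:
  "(3 * k\<^sup>2 + 3 * k + 1) * gamma_T k d \<le> card (Tverts (d + 3 * k))"
proof -
  define D where "D = 3 * k\<^sup>2 + 3 * k + 1"
  define s where "s = (2 * int k, int k)"
  define R where "R = Tverts (d + 3 * k)"
  define I where "I = {0..<int D}"
  have "0 < int D" unfolding D_def by (simp only: of_nat_0_less_iff)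
  then have "I \<noteq> {}" "(\<lambda>x. hex_code_class k (x - s)) ` R \<subseteq> I"
    unfolding I_def hex_code_class_def D_def[symmetric] by auto
  then obtain t where t: "t \<in> I" "card I * card {x \<in> R. hex_code_class k (x - s) = t} \<le> card R"
    using ex_fibre_card_le_average[of R I] finite_Tverts unfolding R_def I_def by blast
  define S where "S = {x \<in> R. hex_code_class k (x - s) = t}"
  have dom: "dist_dom_set d k ((\<lambda>x. tri_proj d (x - s)) ` S)"
    unfolding dist_dom_set_def
  proof (intro conjI ballI)
    show "(\<lambda>x. tri_proj d (x - s)) ` S \<subseteq> Tverts d" using tri_proj_in_Tverts by blast
    fix v assume v: "v \<in> Tverts d"
    obtain c where c: "hex_code_class k c = t" "hex_norm (c - v) \<le> int k"
      using hex_code_class_dense[of t k v] t(1) unfolding I_def D_def by auto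
    have "c + s \<in> S"
      using Tverts_shift_if_hex_norm_le[OF v c(2)] c(1) unfolding S_def R_def s_def by simp
    then have "tri_proj d c \<in> (\<lambda>x. tri_proj d (x - s)) ` S"
      by (rule image_eqI[rotated]) simp
    moreover have "hex_norm (tri_proj d c - v) \<le> int k"
      using hex_norm_tri_proj_le[OF v] c(2) by (rule order_trans)
    ultimately show "\<exists>u \<in> (\<lambda>x. tri_proj d (x - s)) ` S. within_dist d k u v"
      using within_dist_if_hex_norm_le[OF tri_proj_in_Tverts v] by blast
  qed
  have "finite S" unfolding S_def R_def using finite_Tverts by simp
  then have "gamma_T k d \<le> card S"
    using gamma_T_le_card[OF dom] card_image_le order_trans by blast
  then have "D * gamma_T k d \<le> card I * card S"
    unfolding I_def by simp
  also have "\<dots> \<le> card R" using t(2) unfolding S_def .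
  finally show ?thesis unfolding D_def R_def .
qed

lemma gamma_T_bound_if_le_mult:
  assumes "d \<le> (3 * k\<^sup>2 + 3 * k + 1) * Q"
  shows "2 * gamma_T k d \<le> (3 * k\<^sup>2 + 3 * k + 1) * Q\<^sup>2 + (6 * k + 3) * Q + 2"
proof -
  define D where "D = 3 * k\<^sup>2 + 3 * k + 1"
  have "D * (2 * gamma_T k d) \<le> 2 * card (Tverts (d + 3 * k))"
    using gamma_T_mult_le_card_Tverts[of k d] unfolding D_def by simp
  also have "\<dots> = (d + 3 * k + 1) * (d + 3 * k + 2)" by (rule card_Tverts)
  also have "\<dots> \<le> (D * Q + 3 * k + 1) * (D * Q + 3 * k + 2)"
    using assms unfolding D_def by (intro mult_mono) auto
  also have "\<dots> < D * (D * Q\<^sup>2 + (6 * k + 3) * Q + 3)"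
    unfolding D_def by (simp add: algebra_simps power2_eq_square)
  finally show ?thesis unfolding D_def by (simp only: mult_less_cancel1) linarith
qed

theorem theorem1:
  fixes k q \<beta> :: nat
  assumes "k \<ge> 1" and "q \<ge> 1"
    and "\<beta> \<le> (3*k^2 + 3*k + 1) - 1"
  shows "real (gamma_T k ((3*k^2 + 3*k + 1) * q + \<beta>)) \<le>
    (if \<beta> = 0
     then (real (3*k^2 + 3*k + 1) * real q ^ 2 + real (6*k + 3) * real q + 2) / 2
     else (real (3*k^2 + 3*k + 1) * real (q + 1) ^ 2 + real (6*k + 3) * real (q + 1) + 2) / 2)"
proof -
  define D where "D = 3 * k\<^sup>2 + 3 * k + 1"
  define Q where "Q = (if \<beta> = 0 then q else q + 1)"
  have "D * q + \<beta> \<le> D * Q" using assms(3) unfolding D_def Q_def by auto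
  then have "2 * gamma_T k (D * q + \<beta>) \<le> D * Q\<^sup>2 + (6 * k + 3) * Q + 2"
    unfolding D_def by (rule gamma_T_bound_if_le_mult)
  then have "real (gamma_T k (D * q + \<beta>)) \<le> (real D * real Q ^ 2 + real (6 * k + 3) * real Q + 2) / 2"
    by (simp add: field_simps flip: of_nat_mult of_nat_power of_nat_add of_nat_le_iff)
  then show ?thesis unfolding D_def Q_def by (cases "\<beta> = 0") simp_all
qed

end
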